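(* Let $n,m$ be even integers with $0\le m\le n$ and let $h_l$ be the orthonormal Hermite polynomials for the weight $e^{-x^2}$ on $\mathbb{R}$. For $P=\sum_{l=0}^nc_lh_l$ ($c_l\in\mathbb{C}$): (i) $\operatorname{var}_S(P)=\mathbf{c}_e^H\mathbf{J}(-\tfrac12)_{n/2}\mathbf{c}_e+\mathbf{c}_o^H\mathbf{J}(\tfrac12)_{n/2-1}\mathbf{c}_o$, where $\mathbf{c}_e=(c_0,c_2,\dots,c_n)^T$, $\mathbf{c}_o=(c_1,c_3,\dots,c_{n-1})^T$; (ii) if moreover $c_0=\dots=c_{m-1}=0$, then $\operatorname{var}_S(P)=\tilde{\mathbf{c}}_e^H\mathbf{J}(-\tfrac12)^{m/2}_{n/2}\tilde{\mathbf{c}}_e+\tilde{\mathbf{c}}_o^H\mathbf{J}(\tfrac12)^{m/2}_{n/2-1}\tilde{\mathbf{c}}_o$, where $\tilde{\mathbf{c}}_e=(c_m,c_{m+2},\dots,c_n)^T$, $\tilde{\mathbf{c}}_o=(c_{m+1},c_{m+3},\dots,c_{n-1})^T$.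
   Context: $\operatorname{var}_S(f)=\int_{\mathbb{R}}x^2|f(x)|^2e^{-x^2}dx$. For $\alpha>-1$ and integers $0\le M\le N$, $\mathbf{J}(\alpha)^M_N$ denotes the real symmetric tridiagonal $(N-M+1)\times(N-M+1)$ matrix with diagonal entries $a_M,\dots,a_N$ and off-diagonal entries $b_{M+1},\dots,b_N$, where $a_l=2l+\alpha+1$ and $b_l=\sqrt{l(l+\alpha)}$ are the recurrence coefficients of the orthonormal Laguerre polynomials for the weight $x^\alpha e^{-x}$ on $[0,\infty)$ (this is the Jacobi matrix of the associated Laguerre polynomials $p^{(\alpha)}_l(x,M)$); $\mathbf{J}(\alpha)_N=\mathbf{J}(\alpha)^0_N$. When the odd coefficient vector is empty (e.g. $n=m$), the corresponding term is zero. *)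

theory Defs
  imports "HOL-Analysis.Analysis"
begin

fun hermite_H :: "nat \<Rightarrow> real \<Rightarrow> real" where
  "hermite_H 0 x = 1"
| "hermite_H (Suc 0) x = 2 * x"
| "hermite_H (Suc (Suc l)) x = 2 * x * hermite_H (Suc l) x - 2 * real (Suc l) * hermite_H l x"

definition hermite_on :: "nat \<Rightarrow> real \<Rightarrow> real" where
  "hermite_on l x = hermite_H l x / sqrt (2 ^ l * fact l * sqrt pi)"

definition varS :: "(real \<Rightarrow> complex) \<Rightarrow> real" where
  "varS f = (\<integral>x. x\<^sup>2 * (cmod (f x))\<^sup>2 * exp (- x\<^sup>2) \<partial>lborel)"

definition lag_a :: "real \<Rightarrow> int \<Rightarrow> real" where
  "lag_a \<alpha> l = 2 * of_int l + \<alpha> + 1"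

definition lag_b :: "real \<Rightarrow> int \<Rightarrow> real" where
  "lag_b \<alpha> l = sqrt (of_int l * (of_int l + \<alpha>))"

text \<open>Entries of the Jacobi matrix J(alpha)^M_N, rows/columns indexed by M..N:
  diagonal a_i, off-diagonal entries (i,i+1),(i+1,i) equal b_{i+1}.\<close>
definition jacobi_entry :: "real \<Rightarrow> int \<Rightarrow> int \<Rightarrow> real" where
  "jacobi_entry \<alpha> i j =
     (if i = j then lag_a \<alpha> i
      else if j = i + 1 then lag_b \<alpha> j
      else if i = j + 1 then lag_b \<alpha> i
      else 0)"

text \<open>Hermitian form v^H J(alpha)^M_N v for a vector v indexed by M..N
  (integer indices, so an empty index range M > N gives 0).\<close>
definition jacobi_form :: "real \<Rightarrow> int \<Rightarrow> int \<Rightarrow> (int \<Rightarrow> complex) \<Rightarrow> complex" where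
  "jacobi_form \<alpha> M N v =
     (\<Sum>i\<in>{M..N}. \<Sum>j\<in>{M..N}. cnj (v i) * complex_of_real (jacobi_entry \<alpha> i j) * v j)"

end

theory Submission
  imports Defs "HOL-Probability.Distributions" "HOL-Computational_Algebra.Polynomial"
begin

text \<open>
  Integration against \<open>exp (- x\<^sup>2)\<close> is a linear functional on polynomials with
  \<open>\<integral> 2 x p = \<integral> p'\<close>. Since \<open>H(k+1) = 2 X H(k) - H(k)'\<close>, this gives
  \<open>\<integral> H(k+1) q = \<integral> H(k) q'\<close>, hence orthogonality and \<open>\<integral> H(k)\<^sup>2 = 2\<^sup>k k! \<surd>\<pi>\<close>.
  With \<open>X H(k) = H(k+1) / 2 + k H(k-1)\<close>, multiplication by \<open>x\<^sup>2\<close> has, in the orthonormal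
  basis, the matrix with \<open>k + 1/2\<close> on the diagonal and \<open>\<surd>((k+1)(k+2)) / 2\<close> two steps off it.
  It does not couple even and odd indices, and on the even (odd) indices it is exactly the
  Laguerre Jacobi matrix \<open>J(-1/2)\<close> (\<open>J(1/2)\<close>); so \<open>var\<^sub>S(P)\<close> splits into the two
  Hermitian forms. Coefficients vanishing below \<open>m\<close> only contribute zero rows and columns.
\<close>

definition gauss_moment :: "nat \<Rightarrow> real" where
  "gauss_moment j = (if even j then sqrt pi * fact j / (2 ^ j * fact (j div 2)) else 0)"

lemma has_bochner_integral_gauss_moment:
  "has_bochner_integral lborel (\<lambda>x::real. exp (- x\<^sup>2) * x ^ j) (gauss_moment j)"
proof (cases "even j")
  case True
  then obtain k where "j = 2 * k" by blast
  with has_bochner_integral_even_function[OF gaussian_moment_even_pos[of k]] show ?thesis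
    by (simp add: gauss_moment_def)
next
  case False
  then obtain k where "j = 2 * k + 1" using oddE by blast
  with has_bochner_integral_odd_function[OF gaussian_moment_odd_pos[of k]] show ?thesis
    by (simp add: gauss_moment_def)
qed

lemma gauss_moment_Suc: "2 * gauss_moment (Suc i) = real i * gauss_moment (i - 1)"
proof (cases "even i")
  case False
  then obtain k where i: "i = Suc (2 * k)" using oddE by fastforce
  have "sqrt pi * fact (2 * Suc k) / (2 ^ (2 * Suc k) * fact (Suc k)) =
      real (Suc (2 * k)) / 2 * (sqrt pi * fact (2 * k) / (2 ^ (2 * k) * fact k))"
    by (simp add: field_simps del: fact_Suc) (simp add: of_nat_mult field_simps)
  with i show ?thesis
    by (simp add: gauss_moment_def del: fact_Suc)
qed (simp add: gauss_moment_def)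

definition gauss_functional :: "real poly \<Rightarrow> real" where
  "gauss_functional p = (\<Sum>i\<le>degree p. coeff p i * gauss_moment i)"

lemma gauss_functional_eq_sum:
  assumes "degree p < K"
  shows "gauss_functional p = (\<Sum>i<K. coeff p i * gauss_moment i)"
  unfolding gauss_functional_def
  by (rule sum.mono_neutral_left) (use assms in \<open>auto simp: coeff_eq_0\<close>)

lemma has_bochner_integral_gauss_functional:
  "has_bochner_integral lborel (\<lambda>x. poly p x * exp (- x\<^sup>2)) (gauss_functional p)"
proof -
  have "has_bochner_integral lborel
      (\<lambda>x. \<Sum>i\<le>degree p. coeff p i * (exp (- x\<^sup>2) * x ^ i)) (gauss_functional p)"
    unfolding gauss_functional_def
    by (intro has_bochner_integral_sum has_bochner_integral_mult_right
        has_bochner_integral_gauss_moment)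
  then show ?thesis
    by (rule has_bochner_integral_cong[THEN iffD1, rotated 3])
      (simp_all add: poly_altdef sum_distrib_left mult_ac)
qed

lemma gauss_functional_add: "gauss_functional (p + q) = gauss_functional p + gauss_functional q"
proof -
  define K where "K = Suc (max (degree p) (degree q))"
  have "degree (p + q) < K" "degree p < K" "degree q < K"
    unfolding K_def using degree_add_le_max[of p q] by auto
  then show ?thesis by (simp add: gauss_functional_eq_sum sum.distrib algebra_simps)
qed

lemma gauss_functional_smult: "gauss_functional (smult a p) = a * gauss_functional p"
  by (simp add: gauss_functional_def sum_distrib_left mult.assoc)

lemma gauss_functional_diff: "gauss_functional (p - q) = gauss_functional p - gauss_functional q"
  using gauss_functional_add[of p "- q"] gauss_functional_smult[of "- 1" q] by simp

text \<open>Integration by parts against \<open>exp (- x\<^sup>2)\<close>; on monomials it is the moment recursion.\<close>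
lemma gauss_functional_mult_2X: "gauss_functional ([:0, 2:] * p) = gauss_functional (pderiv p)"
proof -
  define d where "d = degree p"
  have X: "[:0, 2:] * p = pCons 0 (smult 2 p)" by simp
  have "degree ([:0, 2:] * p) < Suc (Suc d)"
    unfolding X d_def using degree_smult_le[of 2 p] by (simp add: degree_pCons_eq_if)
  then have "gauss_functional ([:0, 2:] * p) = (\<Sum>i<Suc (Suc d). coeff ([:0, 2:] * p) i * gauss_moment i)"
    by (rule gauss_functional_eq_sum)
  also have "\<dots> = (\<Sum>i<Suc d. coeff p i * (2 * gauss_moment (Suc i)))"
    unfolding X by (subst sum.lessThan_Suc_shift) (simp add: mult_ac)
  also have "\<dots> = (\<Sum>i<Suc d. coeff p i * (real i * gauss_moment (i - 1)))"
    by (simp only: gauss_moment_Suc)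
  also have "\<dots> = (\<Sum>i<Suc d. coeff (pderiv p) i * gauss_moment i)"
    by (subst sum.lessThan_Suc_shift) (simp add: coeff_pderiv d_def coeff_eq_0 algebra_simps)
  also have "\<dots> = gauss_functional (pderiv p)"
    by (rule gauss_functional_eq_sum[symmetric]) (simp add: degree_pderiv d_def)
  finally show ?thesis .
qed

fun hermite_poly :: "nat \<Rightarrow> real poly" where
  "hermite_poly 0 = 1"
| "hermite_poly (Suc 0) = [:0, 2:]"
| "hermite_poly (Suc (Suc l)) =
     [:0, 2:] * hermite_poly (Suc l) - smult (2 * real (Suc l)) (hermite_poly l)"

lemma poly_hermite_poly: "poly (hermite_poly l) x = hermite_H l x"
  by (induction l rule: hermite_poly.induct) auto

lemma degree_hermite_poly: "degree (hermite_poly l) \<le> l"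
proof (induction l rule: hermite_poly.induct)
  case (3 l)
  have "degree ([:0, 2:] * hermite_poly (Suc l)) \<le> Suc (Suc l)"
    using degree_mult_le[of "[:0, 2:]" "hermite_poly (Suc l)"] 3(1) by simp
  moreover have "degree (smult (2 * real (Suc l)) (hermite_poly l)) \<le> Suc (Suc l)"
    using degree_smult_le[of "2 * real (Suc l)" "hermite_poly l"] 3(2) by simp
  ultimately show ?case
    by (simp only: hermite_poly.simps degree_diff_le)
qed auto

lemma hermite_poly_Suc:
  "hermite_poly (Suc l) = [:0, 2:] * hermite_poly l - smult (2 * real l) (hermite_poly (l - 1))"
  by (cases l) simp_all

lemma pderiv_hermite_poly: "pderiv (hermite_poly l) = smult (2 * real l) (hermite_poly (l - 1))"
proof (induction l rule: hermite_poly.induct)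
  case (3 l)
  have "pderiv (hermite_poly (Suc (Suc l))) =
      smult 2 (hermite_poly (Suc l))
      + smult (2 * real (Suc l)) ([:0, 2:] * hermite_poly l - smult (2 * real l) (hermite_poly (l - 1)))"
    using 3 by (simp del: mult_pCons_left add: pderiv_mult pderiv_diff pderiv_smult pderiv_pCons
        smult_diff_right algebra_simps)
  also have "\<dots> = smult (2 * real (Suc (Suc l))) (hermite_poly (Suc l))"
    by (simp only: hermite_poly_Suc[symmetric]) (simp add: smult_add_left[symmetric])
  finally show ?case by simp
qed (simp_all add: pderiv_pCons)

lemma hermite_poly_Suc_pderiv:
  "hermite_poly (Suc l) = [:0, 2:] * hermite_poly l - pderiv (hermite_poly l)"
  by (simp only: hermite_poly_Suc pderiv_hermite_poly)

lemma X_mult_hermite_poly: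
  "[:0, 1:] * hermite_poly l = smult (1/2) (hermite_poly (Suc l)) + smult (real l) (hermite_poly (l - 1))"
  by (simp only: hermite_poly_Suc) (simp add: algebra_simps smult_diff_right)

lemma gauss_functional_hermite_Suc_mult:
  "gauss_functional (hermite_poly (Suc k) * q) = gauss_functional (hermite_poly k * pderiv q)"
proof -
  have "hermite_poly (Suc k) * q = [:0, 2:] * (hermite_poly k * q) - pderiv (hermite_poly k) * q"
    by (simp add: hermite_poly_Suc_pderiv algebra_simps)
  then have "gauss_functional (hermite_poly (Suc k) * q) =
      gauss_functional (pderiv (hermite_poly k * q)) - gauss_functional (pderiv (hermite_poly k) * q)"
    by (simp only: gauss_functional_diff gauss_functional_mult_2X)
  then show ?thesis
    by (simp add: pderiv_mult gauss_functional_add mult.commute)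
qed

lemma gauss_functional_hermite_orthogonal:
  "degree q < k \<Longrightarrow> gauss_functional (hermite_poly k * q) = 0"
proof (induction k arbitrary: q)
  case (Suc k)
  show ?case
  proof (cases "degree q = 0")
    case True
    then have "pderiv q = 0" by (simp add: pderiv_eq_0_iff)
    then show ?thesis by (simp only: gauss_functional_hermite_Suc_mult) (simp add: gauss_functional_def)
  next
    case False
    with Suc.prems have "degree (pderiv q) < k" by (simp add: degree_pderiv)
    then show ?thesis by (simp add: gauss_functional_hermite_Suc_mult Suc.IH)
  qed
qed simp

definition hermite_sqnorm :: "nat \<Rightarrow> real" where
  "hermite_sqnorm k = 2 ^ k * fact k * sqrt pi"

lemma hermite_sqnorm_pos: "hermite_sqnorm k > 0"
  by (simp add: hermite_sqnorm_def)

lemma hermite_sqnorm_Suc: "hermite_sqnorm (Suc k) = 2 * real (Suc k) * hermite_sqnorm k"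
  by (simp add: hermite_sqnorm_def algebra_simps)

lemma gauss_functional_hermite_square:
  "gauss_functional (hermite_poly k * hermite_poly k) = hermite_sqnorm k"
proof (induction k)
  case 0
  then show ?case by (simp add: gauss_functional_def gauss_moment_def hermite_sqnorm_def)
next
  case (Suc k)
  then show ?case
    by (simp add: gauss_functional_hermite_Suc_mult pderiv_hermite_poly gauss_functional_smult
        hermite_sqnorm_Suc del: hermite_poly.simps)
qed

lemma gauss_functional_hermite_hermite:
  "gauss_functional (hermite_poly a * hermite_poly b) = (if a = b then hermite_sqnorm a else 0)"
proof -
  have orth: "gauss_functional (hermite_poly a * hermite_poly b) = 0" if "b < a" for a b
    using that degree_hermite_poly[of b] by (intro gauss_functional_hermite_orthogonal) simp
  show ?thesis
  proof (cases a b rule: linorder_cases)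
    case less
    then show ?thesis using orth[of a b] by (simp add: mult.commute)
  qed (simp_all add: orth gauss_functional_hermite_square)
qed

lemma gauss_functional_X2_hermite_hermite:
  "gauss_functional ([:0, 0, 1:] * hermite_poly k * hermite_poly l) =
       gauss_functional (hermite_poly (Suc k) * hermite_poly (Suc l)) / 4
     + real l / 2 * gauss_functional (hermite_poly (Suc k) * hermite_poly (l - 1))
     + real k / 2 * gauss_functional (hermite_poly (k - 1) * hermite_poly (Suc l))
     + real k * real l * gauss_functional (hermite_poly (k - 1) * hermite_poly (l - 1))"
proof -
  have "[:0, 0, 1:] * hermite_poly k * hermite_poly l =
      ([:0, 1:] * hermite_poly k) * ([:0, 1:] * hermite_poly l)"
    by (simp add: algebra_simps)
  also have "\<dots> =
       smult (1/4) (hermite_poly (Suc k) * hermite_poly (Suc l))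
     + smult (real l / 2) (hermite_poly (Suc k) * hermite_poly (l - 1))
     + smult (real k / 2) (hermite_poly (k - 1) * hermite_poly (Suc l))
     + smult (real k * real l) (hermite_poly (k - 1) * hermite_poly (l - 1))"
    by (simp only: X_mult_hermite_poly) (simp add: algebra_simps del: hermite_poly.simps)
  finally show ?thesis
    by (simp only: gauss_functional_add gauss_functional_smult)
qed

definition hermite_x2 :: "nat \<Rightarrow> nat \<Rightarrow> real" where
  "hermite_x2 k l = (\<integral>x. x\<^sup>2 * hermite_on k x * hermite_on l x * exp (- x\<^sup>2) \<partial>lborel)"

lemma has_bochner_integral_hermite_x2:
  "has_bochner_integral lborel (\<lambda>x. x\<^sup>2 * hermite_on k x * hermite_on l x * exp (- x\<^sup>2))
     (gauss_functional ([:0, 0, 1:] * hermite_poly k * hermite_poly l)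
      / sqrt (hermite_sqnorm k * hermite_sqnorm l))"
  using has_bochner_integral_divide_zero[OF has_bochner_integral_gauss_functional,
      of "[:0, 0, 1:] * hermite_poly k * hermite_poly l" "sqrt (hermite_sqnorm k * hermite_sqnorm l)"]
  by (simp add: hermite_on_def hermite_sqnorm_def poly_hermite_poly real_sqrt_mult power2_eq_square
      mult_ac del: hermite_poly.simps)

lemma hermite_x2_eq:
  "hermite_x2 k l = gauss_functional ([:0, 0, 1:] * hermite_poly k * hermite_poly l)
                    / sqrt (hermite_sqnorm k * hermite_sqnorm l)"
  unfolding hermite_x2_def by (rule has_bochner_integral_integral_eq[OF has_bochner_integral_hermite_x2])

lemma hermite_x2_sym: "hermite_x2 k l = hermite_x2 l k"
  unfolding hermite_x2_def by (simp add: mult_ac)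

lemma hermite_x2_diag: "hermite_x2 k k = real k + 1/2"
proof -
  have "gauss_functional ([:0, 0, 1:] * hermite_poly k * hermite_poly k) =
      hermite_sqnorm (Suc k) / 4 + real k * real k * hermite_sqnorm (k - 1)"
    by (simp only: gauss_functional_X2_hermite_hermite gauss_functional_hermite_hermite) simp
  also have "\<dots> = (real k + 1/2) * hermite_sqnorm k"
    by (cases k) (simp_all add: hermite_sqnorm_Suc algebra_simps)
  finally show ?thesis
    using hermite_sqnorm_pos[of k] by (simp add: hermite_x2_eq)
qed

lemma hermite_x2_Suc_Suc: "hermite_x2 k (Suc (Suc k)) = sqrt ((real k + 1) * (real k + 2)) / 2"
proof -
  define N where "N = hermite_sqnorm k"
  define s where "s = sqrt ((real k + 1) * (real k + 2))"
  have N: "N > 0" unfolding N_def by (rule hermite_sqnorm_pos)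
  have s: "(real k + 1) * (real k + 2) = s * s" "s > 0"
    unfolding s_def by simp_all
  have "gauss_functional ([:0, 0, 1:] * hermite_poly k * hermite_poly (Suc (Suc k))) =
      (real k + 1) * (real k + 2) * N"
  proof -
    have "k - 1 \<noteq> Suc k" "k - 1 \<noteq> Suc (Suc (Suc k))" by arith+
    then show ?thesis
      by (simp only: gauss_functional_X2_hermite_hermite gauss_functional_hermite_hermite)
        (simp add: hermite_sqnorm_Suc N_def field_simps)
  qed
  moreover have "sqrt (hermite_sqnorm k * hermite_sqnorm (Suc (Suc k))) = 2 * N * s"
  proof -
    have "hermite_sqnorm k * hermite_sqnorm (Suc (Suc k)) = (2 * N)\<^sup>2 * ((real k + 1) * (real k + 2))"
      by (simp add: hermite_sqnorm_Suc N_def power2_eq_square algebra_simps)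
    then show ?thesis using N by (simp add: real_sqrt_mult s_def)
  qed
  ultimately have "hermite_x2 k (Suc (Suc k)) = s * s * N / (2 * N * s)"
    by (simp only: hermite_x2_eq s(1))
  also have "\<dots> = s / 2"
    using N s(2) by (simp add: field_simps)
  finally show ?thesis unfolding s_def .
qed

lemma hermite_x2_eq_0:
  "l \<noteq> k \<Longrightarrow> l \<noteq> Suc (Suc k) \<Longrightarrow> k \<noteq> Suc (Suc l) \<Longrightarrow> hermite_x2 k l = 0"
  unfolding hermite_x2_eq gauss_functional_X2_hermite_hermite gauss_functional_hermite_hermite
  by auto

lemma varS_hermite_expansion:
  fixes c :: "nat \<Rightarrow> complex"
  shows "complex_of_real (varS (\<lambda>x. \<Sum>l\<le>n. c l * complex_of_real (hermite_on l x))) =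
    (\<Sum>k\<le>n. \<Sum>l\<le>n. cnj (c k) * c l * complex_of_real (hermite_x2 k l))"
proof -
  let ?P = "\<lambda>x. \<Sum>l\<le>n. c l * complex_of_real (hermite_on l x)"
  have "complex_of_real (x\<^sup>2 * (cmod (?P x))\<^sup>2 * exp (- x\<^sup>2)) =
      (\<Sum>k\<le>n. \<Sum>l\<le>n. cnj (c k) * c l *
         complex_of_real (x\<^sup>2 * hermite_on k x * hermite_on l x * exp (- x\<^sup>2)))" for x
  proof -
    have "complex_of_real ((cmod (?P x))\<^sup>2) = cnj (?P x) * ?P x"
      by (simp only: complex_norm_square mult.commute)
    also have "\<dots> = (\<Sum>k\<le>n. cnj (c k) * complex_of_real (hermite_on k x)) * ?P x"
      by (simp add: cnj_sum)
    also have "\<dots> = (\<Sum>k\<le>n. \<Sum>l\<le>n. cnj (c k) * c l * complex_of_real (hermite_on k x * hermite_on l x))"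
      by (simp only: sum_product) (simp add: mult_ac)
    finally show ?thesis
      by (simp add: sum_distrib_left sum_distrib_right mult_ac)
  qed
  moreover have "has_bochner_integral lborel
      (\<lambda>x. \<Sum>k\<le>n. \<Sum>l\<le>n. cnj (c k) * c l *
         complex_of_real (x\<^sup>2 * hermite_on k x * hermite_on l x * exp (- x\<^sup>2)))
      (\<Sum>k\<le>n. \<Sum>l\<le>n. cnj (c k) * c l * complex_of_real (hermite_x2 k l))"
    by (intro has_bochner_integral_sum has_bochner_integral_mult_right has_bochner_integral_of_real
        has_bochner_integral_hermite_x2[folded hermite_x2_eq])
  ultimately show ?thesis
    unfolding varS_def integral_complex_of_real[symmetric]
    by (simp add: has_bochner_integral_integral_eq)
qed

lemma lag_b_eq_hermite_x2:
  assumes "r \<le> 1"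
  shows "lag_b (real r - 1/2) (int (Suc i)) = hermite_x2 (2 * i + r) (Suc (Suc (2 * i + r)))"
proof -
  have "lag_b (real r - 1/2) (int (Suc i)) = sqrt ((real i + 1) * (real i + 1 + (real r - 1/2)))"
    by (simp add: lag_b_def)
  also have "\<dots> = sqrt ((real (2 * i + r) + 1) * (real (2 * i + r) + 2) / 4)"
    using assms by (intro arg_cong[where f = sqrt]) (cases r; simp add: field_simps)
  also have "\<dots> = hermite_x2 (2 * i + r) (Suc (Suc (2 * i + r)))"
    by (simp only: hermite_x2_Suc_Suc real_sqrt_divide) simp
  finally show ?thesis .
qed

lemma jacobi_entry_eq_hermite_x2:
  assumes "r \<le> 1"
  shows "jacobi_entry (real r - 1/2) (int i) (int j) = hermite_x2 (2 * i + r) (2 * j + r)"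
proof -
  consider "i = j" | "j = Suc i" | "i = Suc j" | "i \<noteq> j" "j \<noteq> Suc i" "i \<noteq> Suc j"
    by blast
  then show ?thesis
  proof cases
    case 1
    then show ?thesis by (simp add: jacobi_entry_def lag_a_def hermite_x2_diag)
  next
    case 2
    then show ?thesis using lag_b_eq_hermite_x2[OF assms, of i] by (simp add: jacobi_entry_def)
  next
    case 3
    then show ?thesis
      using lag_b_eq_hermite_x2[OF assms, of j] hermite_x2_sym by (simp add: jacobi_entry_def)
  next
    case 4
    then show ?thesis by (simp add: jacobi_entry_def hermite_x2_eq_0)
  qed
qed

lemma sum_atMost_even_odd:
  fixes f :: "nat \<Rightarrow> 'a::comm_monoid_add"
  shows "(\<Sum>k\<le>2 * q. f k) = (\<Sum>i<Suc q. f (2 * i)) + (\<Sum>i<q. f (2 * i + 1))"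
proof (induction q)
  case (Suc q)
  have "{..2 * Suc q} = insert (2 * q + 2) (insert (2 * q + 1) {..2 * q})" by auto
  with Suc show ?case by (simp add: algebra_simps)
qed simp

lemma jacobi_form_0_eq_sum:
  "jacobi_form \<alpha> 0 (int q - 1) v =
    (\<Sum>i<q. \<Sum>j<q. cnj (v (int i)) * complex_of_real (jacobi_entry \<alpha> (int i) (int j)) * v (int j))"
proof -
  have "{0..int q - 1} = int ` {..<q}"
    using image_int_atLeastLessThan[of 0 q] by (auto simp: lessThan_atLeast0)
  then show ?thesis
    unfolding jacobi_form_def by (simp add: sum.reindex)
qed

lemma hermite_x2_form_eq_jacobi_forms:
  fixes c :: "nat \<Rightarrow> complex"
  shows "(\<Sum>k\<le>2 * q. \<Sum>l\<le>2 * q. cnj (c k) * c l * complex_of_real (hermite_x2 k l)) =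
      jacobi_form (-1/2) 0 (int q) (\<lambda>l. c (nat (2 * l)))
    + jacobi_form (1/2) 0 (int q - 1) (\<lambda>l. c (nat (2 * l + 1)))"
proof -
  have even: "jacobi_entry (-1/2) (int i) (int j) = hermite_x2 (2 * i) (2 * j)"
    and odd: "jacobi_entry (1/2) (int i) (int j) = hermite_x2 (2 * i + 1) (2 * j + 1)" for i j
    using jacobi_entry_eq_hermite_x2[of 0 i j] jacobi_entry_eq_hermite_x2[of 1 i j] by simp_all
  have parity: "hermite_x2 (2 * i) (2 * j + 1) = 0" "hermite_x2 (2 * i + 1) (2 * j) = 0" for i j
    by (intro hermite_x2_eq_0; presburger)+
  have nat_int: "nat (2 * int i) = 2 * i" "nat (2 * int i + 1) = 2 * i + 1" for i
    by auto
  have "int (Suc q) - 1 = int q" by simp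
  with jacobi_form_0_eq_sum[of "-1/2" "Suc q"] jacobi_form_0_eq_sum[of "1/2" q] show ?thesis
    by (simp only: nat_int even odd parity sum_atMost_even_odd sum.distrib) (simp add: algebra_simps)
qed

lemma jacobi_form_zero_prefix:
  assumes "0 \<le> M" and "\<And>i. 0 \<le> i \<Longrightarrow> i < M \<Longrightarrow> v i = 0"
  shows "jacobi_form \<alpha> M N v = jacobi_form \<alpha> 0 N v"
proof -
  have "jacobi_form \<alpha> 0 N v =
      (\<Sum>i\<in>{M..N}. \<Sum>j\<in>{0..N}. cnj (v i) * complex_of_real (jacobi_entry \<alpha> i j) * v j)"
    unfolding jacobi_form_def by (rule sum.mono_neutral_right) (use assms in auto)
  also have "\<dots> = jacobi_form \<alpha> M N v"
    unfolding jacobi_form_def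
  proof (rule sum.cong[OF refl])
    fix i
    show "(\<Sum>j\<in>{0..N}. cnj (v i) * complex_of_real (jacobi_entry \<alpha> i j) * v j) =
        (\<Sum>j\<in>{M..N}. cnj (v i) * complex_of_real (jacobi_entry \<alpha> i j) * v j)"
      by (rule sum.mono_neutral_right) (use assms in auto)
  qed
  finally show ?thesis ..
qed

theorem lemma5p1:
  fixes n m :: nat and c :: "nat \<Rightarrow> complex"
  assumes "even n" and "even m" and "m \<le> n"
  defines "P \<equiv> (\<lambda>x::real. \<Sum>l\<le>n. c l * complex_of_real (hermite_on l x))"
  shows "complex_of_real (varS P) =
           jacobi_form (-1/2) 0 (int n div 2) (\<lambda>l. c (nat (2 * l)))
         + jacobi_form (1/2) 0 (int n div 2 - 1) (\<lambda>l. c (nat (2 * l + 1)))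
         \<and> ((\<forall>l<m. c l = 0) \<longrightarrow>
         complex_of_real (varS P) =
           jacobi_form (-1/2) (int m div 2) (int n div 2) (\<lambda>l. c (nat (2 * l)))
         + jacobi_form (1/2) (int m div 2) (int n div 2 - 1) (\<lambda>l. c (nat (2 * l + 1))))"
proof -
  obtain q where q: "n = 2 * q" using \<open>even n\<close> by blast
  obtain p where p: "m = 2 * p" using \<open>even m\<close> by blast
  have n_half: "int n div 2 = int q" and m_half: "int m div 2 = int p"
    using q p by simp_all
  have whole: "complex_of_real (varS P) =
      jacobi_form (-1/2) 0 (int n div 2) (\<lambda>l. c (nat (2 * l)))
    + jacobi_form (1/2) 0 (int n div 2 - 1) (\<lambda>l. c (nat (2 * l + 1)))"
    unfolding P_def varS_hermite_expansion n_half unfolding q by (rule hermite_x2_form_eq_jacobi_forms)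
  moreover have "complex_of_real (varS P) =
      jacobi_form (-1/2) (int m div 2) (int n div 2) (\<lambda>l. c (nat (2 * l)))
    + jacobi_form (1/2) (int m div 2) (int n div 2 - 1) (\<lambda>l. c (nat (2 * l + 1)))"
    if vanish: "\<forall>l<m. c l = 0"
  proof -
    have "jacobi_form (-1/2) (int p) (int n div 2) (\<lambda>l. c (nat (2 * l))) =
        jacobi_form (-1/2) 0 (int n div 2) (\<lambda>l. c (nat (2 * l)))"
      by (rule jacobi_form_zero_prefix) (use vanish p in auto)
    moreover have "jacobi_form (1/2) (int p) (int n div 2 - 1) (\<lambda>l. c (nat (2 * l + 1))) =
        jacobi_form (1/2) 0 (int n div 2 - 1) (\<lambda>l. c (nat (2 * l + 1)))"
      by (rule jacobi_form_zero_prefix) (use vanish p in auto)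
    ultimately show ?thesis
      using whole by (simp add: m_half)
  qed
  ultimately show ?thesis by blast
qed

end
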